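(* Suppose $\ell\in\mathcal{D}^-[0,\infty)$, $r\in\mathcal{D}^+[0,\infty)$ and $\psi\in\mathcal{D}[0,\infty)$ are piecewise constant, each with a finite number of jumps, and $\ell\le r$. Then the pair $(\psi-\Xi_{\ell,r}(\psi),\,-\Xi_{\ell,r}(\psi))$ is the unique solution to the ESP on $[\ell(\cdot),r(\cdot)]$ for $\psi$, where for $t\ge0$ $$\Xi_{\ell,r}(\psi)(t)=\max\Big(\big[(\psi(0)-r(0))^+\wedge\inf_{u\in[0,t]}(\psi(u)-\ell(u))\big],\ \sup_{s\in[0,t]}\big[(\psi(s)-r(s))\wedge\inf_{u\in[s,t]}(\psi(u)-\ell(u))\big]\Big).$$
   Context: $\mathcal{D}[0,\infty)$ denotes the càdlàg functions $[0,\infty)\to(-\infty,\infty)$; $\mathcal{D}^-[0,\infty)$ (resp. $\mathcal{D}^+[0,\infty)$) denotes càdlàg functions with values in $[-\infty,\infty)$ (resp. $(-\infty,\infty]$); $a\wedge b=\min\{a,b\}$, $a^+=\max\{a,0\}$. ESP: $(\phi,\eta)\in\mathcal{D}[0,\infty)^2$ solves the ESP on $[\ell(\cdot),r(\cdot)]$ for $\psi$ if (1) $\phi(t)=\psi(t)+\eta(t)\in[\ell(t),r(t)]$ for all $t\ge0$; (2) for all $0\le s\le t$: $\eta(t)-\eta(s)\ge0$ if $\phi(u)<r(u)$ for all $u\in(s,t]$, and $\eta(t)-\eta(s)\le0$ if $\phi(u)>\ell(u)$ for all $u\in(s,t]$; (3) for all $t\ge0$: $\eta(t)-\eta(t-)\ge0$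 if $\phi(t)<r(t)$, and $\eta(t)-\eta(t-)\le0$ if $\phi(t)>\ell(t)$, where $\eta(0-)=0$. *)

theory Defs
  imports "HOL-Analysis.Analysis" "HOL-Library.Extended_Real"
begin

definition cadlag :: "(real \<Rightarrow> 'a::topological_space) \<Rightarrow> bool" where
  "cadlag f \<longleftrightarrow> (\<forall>t\<ge>0. (f \<longlongrightarrow> f t) (at_right t)) \<and>
                (\<forall>t>0. \<exists>L. (f \<longlongrightarrow> L) (at_left t))"

definition piecewise_const :: "(real \<Rightarrow> 'a) \<Rightarrow> bool" where
  "piecewise_const f \<longleftrightarrow> (\<exists>S. finite S \<and>
      (\<forall>s t. 0 \<le> s \<longrightarrow> s \<le> t \<longrightarrow> {s<..t} \<inter> S = {} \<longrightarrow> f s = f t))"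

definition left_lim :: "(real \<Rightarrow> real) \<Rightarrow> real \<Rightarrow> real" where
  "left_lim \<eta> t = (if t = 0 then 0 else Lim (at_left t) \<eta>)"

definition ESP :: "(real \<Rightarrow> ereal) \<Rightarrow> (real \<Rightarrow> ereal) \<Rightarrow> (real \<Rightarrow> real)
                   \<Rightarrow> (real \<Rightarrow> real) \<Rightarrow> (real \<Rightarrow> real) \<Rightarrow> bool" where
  "ESP l r \<psi> \<phi> \<eta> \<longleftrightarrow>
     cadlag \<phi> \<and> cadlag \<eta> \<and>
     (\<forall>t\<ge>0. \<phi> t = \<psi> t + \<eta> t \<and> l t \<le> ereal (\<phi> t) \<and> ereal (\<phi> t) \<le> r t) \<and>
     (\<forall>s t. 0 \<le> s \<longrightarrow> s \<le> t \<longrightarrow>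
        ((\<forall>u\<in>{s<..t}. ereal (\<phi> u) < r u) \<longrightarrow> \<eta> t - \<eta> s \<ge> 0) \<and>
        ((\<forall>u\<in>{s<..t}. ereal (\<phi> u) > l u) \<longrightarrow> \<eta> t - \<eta> s \<le> 0)) \<and>
     (\<forall>t\<ge>0. (ereal (\<phi> t) < r t \<longrightarrow> \<eta> t - left_lim \<eta> t \<ge> 0) \<and>
             (ereal (\<phi> t) > l t \<longrightarrow> \<eta> t - left_lim \<eta> t \<le> 0))"

definition Xi :: "(real \<Rightarrow> ereal) \<Rightarrow> (real \<Rightarrow> ereal) \<Rightarrow> (real \<Rightarrow> real) \<Rightarrow> real \<Rightarrow> ereal" where
  "Xi l r \<psi> t =
     max (min (max (ereal (\<psi> 0) - r 0) 0) (INF u\<in>{0..t}. ereal (\<psi> u) - l u))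
         (SUP s\<in>{0..t}. min (ereal (\<psi> s) - r s) (INF u\<in>{s..t}. ereal (\<psi> u) - l u))"

end

theory Submission
  imports Defs
begin

text \<open>Write f = \<psi> - l and g = \<psi> - r. As long as the data do not jump, \<Xi> stays constant; at a
  jump time T it moves from its left limit a to max (min a (f T)) (g T), the projection of a
  onto [g T, f T] (at time 0 it starts from a = 0). Hence \<phi> = \<psi> - \<Xi> stays in [l, r], and
  \<eta> = -\<Xi> jumps up only when \<phi> lands on l and down only when it lands on r; since all functions
  are step functions, the interval conditions of the ESP follow from these jump conditions.
  For uniqueness, at the first time where two solutions differ their left limits agree, so the
  jump condition (again a projection) forces equal values, and on the following interval where
  the data are constant \<eta> is constant for every solution.\<close>

definition jumps_in :: "real set \<Rightarrow> (real \<Rightarrow> 'a) \<Rightarrow> bool" where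
  "jumps_in S f \<longleftrightarrow> (\<forall>s t. 0 \<le> s \<longrightarrow> s \<le> t \<longrightarrow> {s<..t} \<inter> S = {} \<longrightarrow> f s = f t)"

lemma piecewise_const_iff_jumps_in: "piecewise_const f \<longleftrightarrow> (\<exists>S. finite S \<and> jumps_in S f)"
  by (simp add: piecewise_const_def jumps_in_def)

lemma jumps_in_subset: "jumps_in S f \<Longrightarrow> S \<subseteq> S' \<Longrightarrow> jumps_in S' f"
  unfolding jumps_in_def by blast

lemma jumps_in_comp: "jumps_in S f \<Longrightarrow> jumps_in S (\<lambda>t. h (f t))"
  unfolding jumps_in_def by metis

lemma jumps_in_comp2: "jumps_in S f \<Longrightarrow> jumps_in S g \<Longrightarrow> jumps_in S (\<lambda>t. h (f t) (g t))"
  unfolding jumps_in_def by metis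

lemma jumps_inD: "jumps_in S f \<Longrightarrow> 0 \<le> s \<Longrightarrow> s \<le> t \<Longrightarrow> {s<..t} \<inter> S = {} \<Longrightarrow> f s = f t"
  unfolding jumps_in_def by blast

lemma jumps_in_const_Icc:
  assumes "jumps_in S f" "0 \<le> s" "{s<..t} \<inter> S = {}" "u \<in> {s..t}"
  shows "f u = f s"
proof -
  have gap: "{s<..u} \<inter> S = {}" using assms(3,4) by (auto simp: disjoint_iff)
  show ?thesis using jumps_inD[OF assms(1,2) _ gap] assms(4) by auto
qed

lemma jumps_in_const_Ico:
  assumes "jumps_in S f" "0 \<le> s" "{s<..<t} \<inter> S = {}" "u \<in> {s..<t}"
  shows "f u = f s"
proof -
  have gap: "{s<..u} \<inter> S = {}" using assms(3,4) by (auto simp: disjoint_iff)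
  show ?thesis using jumps_inD[OF assms(1,2) _ gap] assms(4) by auto
qed

lemma finite_gap_left:
  fixes S :: "real set"
  assumes "finite S" "a < T"
  obtains s0 where "a \<le> s0" "s0 < T" "{s0<..<T} \<inter> S = {}"
proof (cases "S \<inter> {a<..<T} = {}")
  case True
  then show ?thesis using that assms(2) by blast
next
  case False
  define s0 where "s0 = Max (S \<inter> {a<..<T})"
  have "s0 \<in> S \<inter> {a<..<T}" unfolding s0_def using False assms(1) by (intro Max_in) auto
  moreover have "{s0<..<T} \<inter> S = {}"
  proof -
    have "x \<le> s0" if "x \<in> S \<inter> {a<..<T}" for x
      unfolding s0_def using assms(1) that by (intro Max_ge) auto
    then show ?thesis using calculation by force
  qed
  ultimately show ?thesis by (intro that) auto
qed

lemma finite_gap_right: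
  fixes S :: "real set"
  assumes "finite S"
  obtains b where "T < b" "{T<..<b} \<inter> S = {}"
proof (cases "S \<inter> {T<..<T+1} = {}")
  case True
  then show ?thesis using that by (auto intro: that[of "T + 1"])
next
  case False
  define b where "b = Min (S \<inter> {T<..<T+1})"
  have "b \<in> S \<inter> {T<..<T+1}" unfolding b_def using False assms(1) by (intro Min_in) auto
  moreover have "{T<..<b} \<inter> S = {}"
  proof -
    have "b \<le> x" if "x \<in> S \<inter> {T<..<T+1}" for x
      unfolding b_def using assms(1) that by (intro Min_le) auto
    then show ?thesis using calculation by force
  qed
  ultimately show ?thesis using that by auto
qed

lemma jumps_in_eventually_right:
  assumes "finite S" "jumps_in S f" "0 \<le> T"
  shows "eventually (\<lambda>u. f u = f T) (at_right T)"
proof -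
  obtain b where b: "T < b" "{T<..<b} \<inter> S = {}" using finite_gap_right[OF assms(1)] .
  show ?thesis using eventually_at_right_real[OF b(1)]
    by (elim eventually_mono) (intro jumps_in_const_Ico[OF assms(2,3) b(2)], auto)
qed

lemma jumps_in_eventually_left:
  assumes "jumps_in S f" "0 \<le> s0" "s0 < T" "{s0<..<T} \<inter> S = {}"
  shows "eventually (\<lambda>u. f u = f s0) (at_left T)"
  using eventually_at_left_real[OF assms(3)]
  by (elim eventually_mono) (intro jumps_in_const_Ico[OF assms(1,2,4)], auto)

lemma jumps_in_cadlag:
  fixes f :: "real \<Rightarrow> 'a::topological_space"
  assumes "finite S" "jumps_in S f"
  shows "cadlag f"
  unfolding cadlag_def
proof (intro conjI allI impI)
  show "(f \<longlongrightarrow> f T) (at_right T)" if "0 \<le> T" for T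
    using jumps_in_eventually_right[OF assms that] by (rule tendsto_eventually)
  show "\<exists>L. (f \<longlongrightarrow> L) (at_left T)" if T: "0 < T" for T
  proof -
    obtain s0 where "0 \<le> s0" "s0 < T" "{s0<..<T} \<inter> S = {}"
      using finite_gap_left[OF assms(1) T] by blast
    then have "(f \<longlongrightarrow> f s0) (at_left T)"
      by (intro tendsto_eventually jumps_in_eventually_left[OF assms(2)])
    then show ?thesis ..
  qed
qed

lemma left_lim_jumps_in:
  assumes "jumps_in S h" "0 \<le> s0" "s0 < T" "{s0<..<T} \<inter> S = {}"
  shows "left_lim h T = h s0"
proof -
  have "(h \<longlongrightarrow> h s0) (at_left T)"
    using jumps_in_eventually_left[OF assms] by (rule tendsto_eventually)
  then have "Lim (at_left T) h = h s0" by (intro tendsto_Lim) (auto simp: trivial_limit_at_left_real)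
  then show ?thesis unfolding left_lim_def using assms(2,3) by simp
qed


lemma jumps_in_finite_image:
  assumes "finite S" "jumps_in S f"
  shows "finite (f ` {0..t})"
proof (rule finite_subset)
  show "finite (f ` ({0} \<union> S))" using assms(1) by simp
  show "f ` {0..t} \<subseteq> f ` ({0} \<union> S)"
  proof
    fix y assume "y \<in> f ` {0..t}"
    then obtain u where u: "0 \<le> u" "u \<le> t" "y = f u" by auto
    define K where "K = {0} \<union> S \<inter> {..u}"
    have K: "finite K" "0 \<in> K" unfolding K_def using assms(1) by auto
    define m where "m = Max K"
    have m: "m \<in> K" "0 \<le> m" unfolding m_def using K by (auto intro: Max_in Max_ge)
    have "x \<le> m" if "x \<in> S" "x \<le> u" for x
      unfolding m_def using K that by (intro Max_ge) (auto simp: K_def)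
    then have "{m<..u} \<inter> S = {}" by force
    moreover have "m \<le> u" using m(1) u(1) by (auto simp: K_def)
    ultimately have "f u = f m" by (intro jumps_in_const_Icc[OF assms(2) m(2)]) auto
    then show "y \<in> f ` ({0} \<union> S)" using m(1) u(3) by (auto simp: K_def)
  qed
qed

lemma jumps_in_antimono:
  fixes h :: "real \<Rightarrow> 'a::linorder"
  assumes S: "finite S" "jumps_in S h" and st: "0 \<le> s" "s \<le> t"
    and down: "\<And>s0 T. s \<le> s0 \<Longrightarrow> s0 < T \<Longrightarrow> T \<le> t \<Longrightarrow> {s0<..<T} \<inter> S = {} \<Longrightarrow> h T \<le> h s0"
  shows "h t \<le> h s"
  using st(2) down
proof (induction "card (S \<inter> {s<..t})" arbitrary: t rule: less_induct)
  case less
  show ?case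
  proof (cases "S \<inter> {s<..t} = {}")
    case True
    then have "h s = h t" using jumps_inD[OF S(2) st(1) less.prems(1)] by (simp add: Int_commute)
    then show ?thesis by simp
  next
    case False
    define m where "m = Max (S \<inter> {s<..t})"
    have m: "m \<in> S" "s < m" "m \<le> t"
      using Max_in[of "S \<inter> {s<..t}"] False S(1) unfolding m_def by auto
    have "x \<le> m" if "x \<in> S \<inter> {s<..t}" for x unfolding m_def using S(1) that by (intro Max_ge) auto
    then have "{m<..t} \<inter> S = {}" using m(2) by force
    then have "h m = h t" using jumps_inD[OF S(2) _ m(3)] m(2) st(1) by simp
    obtain s0 where s0: "s \<le> s0" "s0 < m" "{s0<..<m} \<inter> S = {}"
      using finite_gap_left[OF S(1) m(2)] .
    have "h m \<le> h s0" using less.prems(2)[OF s0(1,2) m(3) s0(3)] .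
    moreover have "card (S \<inter> {s<..s0}) < card (S \<inter> {s<..t})"
    proof -
      have "S \<inter> {s<..s0} \<subseteq> S \<inter> {s<..t} - {m}" using m s0(2) by auto
      then have "card (S \<inter> {s<..s0}) \<le> card (S \<inter> {s<..t} - {m})"
        using S(1) by (intro card_mono) auto
      also have "\<dots> < card (S \<inter> {s<..t})" using S(1) m by (intro card_Diff1_less) auto
      finally show ?thesis .
    qed
    then have "h s0 \<le> h s"
      using less.hyps[OF _ s0(1)] less.prems(2) s0(2) m(3)
      by (meson le_less_trans less_le_trans order.strict_implies_order)
    ultimately show ?thesis using \<open>h m = h t\<close> by simp
  qed
qed

definition Xi_gen :: "'a \<Rightarrow> (real \<Rightarrow> 'a) \<Rightarrow> (real \<Rightarrow> 'a) \<Rightarrow> real \<Rightarrow> 'a::complete_linorder" where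
  "Xi_gen c f g t = max (min c (INF u\<in>{0..t}. f u)) (SUP s\<in>{0..t}. min (g s) (INF u\<in>{s..t}. f u))"

lemma Xi_eq_Xi_gen:
  "Xi l r \<psi> = Xi_gen (max (ereal (\<psi> 0) - r 0) 0) (\<lambda>t. ereal (\<psi> t) - l t) (\<lambda>t. ereal (\<psi> t) - r t)"
  by (simp add: fun_eq_iff Xi_def Xi_gen_def)

lemma INF_Icc_split:
  fixes f :: "'a::linorder \<Rightarrow> 'b::complete_linorder"
  assumes "a \<le> s" "s \<le> t"
  shows "(INF u\<in>{a..t}. f u) = min (INF u\<in>{a..s}. f u) (INF u\<in>{s..t}. f u)"
proof -
  have "{a..t} = {a..s} \<union> {s..t}" using assms by auto
  then show ?thesis by (simp add: INF_union inf_min)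
qed

lemma SUP_Icc_split:
  fixes f :: "'a::linorder \<Rightarrow> 'b::complete_linorder"
  assumes "a \<le> s" "s \<le> t"
  shows "(SUP u\<in>{a..t}. f u) = max (SUP u\<in>{a..s}. f u) (SUP u\<in>{s..t}. f u)"
proof -
  have "{a..t} = {a..s} \<union> {s..t}" using assms by auto
  then show ?thesis by (simp add: SUP_union sup_max)
qed

lemma Xi_gen_restart:
  assumes "0 \<le> s" "s \<le> t"
  shows "Xi_gen c f g t = max (min (Xi_gen c f g s) (INF u\<in>{s..t}. f u))
                              (SUP v\<in>{s..t}. min (g v) (INF u\<in>{v..t}. f u))"
proof -
  define I where "I = (INF u\<in>{s..t}. f u)"
  define M where "M = (SUP v\<in>{0..s}. min (g v) (INF u\<in>{v..s}. f u))"
  have "(SUP v\<in>{0..s}. min (g v) (INF u\<in>{v..t}. f u)) =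
        (SUP v\<in>{0..s}. min I (min (g v) (INF u\<in>{v..s}. f u)))"
  proof (rule SUP_cong)
    fix v assume "v \<in> {0..s}"
    then have "(INF u\<in>{v..t}. f u) = min (INF u\<in>{v..s}. f u) I"
      unfolding I_def using assms by (intro INF_Icc_split) auto
    then show "min (g v) (INF u\<in>{v..t}. f u) = min I (min (g v) (INF u\<in>{v..s}. f u))"
      by (simp add: ac_simps)
  qed simp
  also have "\<dots> = min I M"
    unfolding M_def using inf_SUP[of I "\<lambda>v. min (g v) (INF u\<in>{v..s}. f u)" "{0..s}"]
    by (simp add: inf_min)
  finally have "(SUP v\<in>{0..t}. min (g v) (INF u\<in>{v..t}. f u)) =
      max (min I M) (SUP v\<in>{s..t}. min (g v) (INF u\<in>{v..t}. f u))"
    using SUP_Icc_split[OF assms, of "\<lambda>v. min (g v) (INF u\<in>{v..t}. f u)"] by simp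
  moreover have "(INF u\<in>{0..t}. f u) = min (INF u\<in>{0..s}. f u) I"
    unfolding I_def by (rule INF_Icc_split[OF assms])
  moreover have "min (Xi_gen c f g s) I = max (min (min c (INF u\<in>{0..s}. f u)) I) (min M I)"
    unfolding Xi_gen_def M_def by (rule min_max_distrib1)
  ultimately show ?thesis unfolding Xi_gen_def I_def by (simp add: ac_simps)
qed

lemma Xi_gen_between:
  assumes "0 \<le> t" "g t \<le> f t"
  shows "g t \<le> Xi_gen c f g t" "Xi_gen c f g t \<le> f t"
proof -
  have "min (g t) (INF u\<in>{t..t}. f u) \<le> (SUP s\<in>{0..t}. min (g s) (INF u\<in>{s..t}. f u))"
    by (rule SUP_upper) (use assms in auto)
  then show "g t \<le> Xi_gen c f g t"
    using assms(2) unfolding Xi_gen_def by (simp add: le_max_iff_disj min.absorb1)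
  have "(INF u\<in>{s..t}. f u) \<le> f t" if "s \<in> {0..t}" for s
    using that by (intro INF_lower) auto
  then have "(SUP s\<in>{0..t}. min (g s) (INF u\<in>{s..t}. f u)) \<le> f t"
    by (intro SUP_least) (simp add: min.coboundedI2)
  moreover have "(INF u\<in>{0..t}. f u) \<le> f t" by (rule INF_lower) (use assms in auto)
  ultimately show "Xi_gen c f g t \<le> f t" unfolding Xi_gen_def by (simp add: min.coboundedI2)
qed

lemma Xi_gen_const:
  assumes "0 \<le> s" "s \<le> t" "b \<le> a"
    and flat: "\<And>u. u \<in> {s..t} \<Longrightarrow> f u = a" "\<And>u. u \<in> {s..t} \<Longrightarrow> g u = b"
  shows "Xi_gen c f g t = Xi_gen c f g s"
proof -
  have inf: "(INF u\<in>{v..t}. f u) = a" if "v \<in> {s..t}" for v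
  proof -
    have "(INF u\<in>{v..t}. f u) = (INF u\<in>{v..t}. a)" by (rule INF_cong) (use that flat in auto)
    then show ?thesis using that by simp
  qed
  have "(SUP v\<in>{s..t}. min (g v) (INF u\<in>{v..t}. f u)) = (SUP v\<in>{s..t}. b)"
    by (rule SUP_cong) (use inf flat assms(3) in \<open>auto simp: min.absorb1\<close>)
  then have "(SUP v\<in>{s..t}. min (g v) (INF u\<in>{v..t}. f u)) = b" using assms(2) by simp
  moreover have "b \<le> Xi_gen c f g s" "Xi_gen c f g s \<le> a"
    using Xi_gen_between[of s g f c] assms(1,2,3) flat by auto
  moreover have "(INF u\<in>{s..t}. f u) = a" using inf[of s] assms(2) by simp
  ultimately show ?thesis
    unfolding Xi_gen_restart[OF assms(1,2)] by (simp add: min.absorb1 max.absorb1)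
qed

lemma Xi_gen_jump:
  assumes "0 \<le> s" "s < T" "b \<le> a" "g T \<le> f T"
    and flat: "\<And>u. u \<in> {s..<T} \<Longrightarrow> f u = a" "\<And>u. u \<in> {s..<T} \<Longrightarrow> g u = b"
  shows "Xi_gen c f g T = max (min (Xi_gen c f g s) (f T)) (g T)"
proof -
  have inf: "(INF u\<in>{v..T}. f u) = min a (f T)" if "v \<in> {s..<T}" for v
  proof -
    have "{v..T} = insert T {v..<T}" using that by auto
    moreover have "(INF u\<in>{v..<T}. f u) = (INF u\<in>{v..<T}. a)"
      by (rule INF_cong) (use that flat in auto)
    ultimately show ?thesis using that by (simp add: inf_min min.commute)
  qed
  have "{s..T} = insert T {s..<T}" using assms(2) by auto
  moreover have "(SUP v\<in>{s..<T}. min (g v) (INF u\<in>{v..T}. f u)) =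
                 (SUP v\<in>{s..<T}. min b (min a (f T)))"
    by (rule SUP_cong) (use inf flat in auto)
  ultimately have "(SUP v\<in>{s..T}. min (g v) (INF u\<in>{v..T}. f u)) =
                   max (min b (min a (f T))) (g T)"
    using assms(2,4) by (simp add: sup_max max.commute min.absorb1)
  moreover have "(INF u\<in>{s..T}. f u) = min a (f T)" using inf[of s] assms(2) by simp
  moreover have "b \<le> Xi_gen c f g s" "Xi_gen c f g s \<le> a"
    using Xi_gen_between[of s g f c] assms(1,2,3) flat by auto
  then have "min (Xi_gen c f g s) (min a (f T)) = min (Xi_gen c f g s) (f T)"
    and "min b (min a (f T)) \<le> min (Xi_gen c f g s) (f T)"
    by (auto simp: min_def)
  ultimately show ?thesis
    unfolding Xi_gen_restart[OF assms(1) less_imp_le[OF assms(2)]]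
    by (simp add: max.assoc[symmetric] max.absorb1)
qed

lemma Xi_gen_at_0:
  assumes "g 0 \<le> f 0"
  shows "Xi_gen (max (g 0) a) f g 0 = max (min a (f 0)) (g 0)"
  using assms by (auto simp: Xi_gen_def min_def max_def)

text \<open>For g \<le> f, max (min a f) g is the projection of a onto [g, f]; it lies below a only
  when it sits at g and above a only when it sits at f.\<close>

lemma max_min_jump_direction:
  fixes a f g :: "'a::linorder"
  shows "(g < max (min a f) g \<longrightarrow> max (min a f) g \<le> a) \<and>
         (max (min a f) g < f \<longrightarrow> a \<le> max (min a f) g)"
  by (auto simp: min_def max_def)

lemma Xi_gen_jumps_in:
  assumes "jumps_in S f" "jumps_in S g" "\<And>t. 0 \<le> t \<Longrightarrow> g t \<le> f t"
  shows "jumps_in S (Xi_gen c f g)"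
  unfolding jumps_in_def
proof (intro allI impI)
  fix s t :: real assume st: "0 \<le> s" "s \<le> t" "{s<..t} \<inter> S = {}"
  have "Xi_gen c f g t = Xi_gen c f g s"
    using st(1,2) assms(3)[OF st(1)]
      jumps_in_const_Icc[OF assms(1) st(1,3)] jumps_in_const_Icc[OF assms(2) st(1,3)]
    by (rule Xi_gen_const)
  then show "Xi_gen c f g s = Xi_gen c f g t" ..
qed

lemma Xi_gen_finite:
  fixes f g :: "real \<Rightarrow> ereal"
  assumes "0 \<le> t" "\<bar>c\<bar> \<noteq> \<infinity>" "finite (f ` {0..t})" "finite (g ` {0..t})"
    and "\<And>u. u \<in> {0..t} \<Longrightarrow> f u \<noteq> -\<infinity>" "\<And>u. u \<in> {0..t} \<Longrightarrow> g u \<noteq> \<infinity>"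
  shows "\<bar>Xi_gen c f g t\<bar> \<noteq> \<infinity>"
proof -
  have "(INF u\<in>{0..t}. f u) \<in> f ` {0..t}" "(SUP u\<in>{0..t}. g u) \<in> g ` {0..t}"
    using assms(1,3,4) by (auto simp: cInf_eq_Min cSup_eq_Max intro!: Min_in Max_in)
  then obtain v w where "v \<in> {0..t}" "(INF u\<in>{0..t}. f u) = f v"
    and "w \<in> {0..t}" "(SUP u\<in>{0..t}. g u) = g w"
    by blast
  then have inf_fin: "(INF u\<in>{0..t}. f u) \<noteq> -\<infinity>" and sup_fin: "(SUP u\<in>{0..t}. g u) \<noteq> \<infinity>"
    using assms(5,6) by metis+
  have "min c (INF u\<in>{0..t}. f u) \<le> Xi_gen c f g t" unfolding Xi_gen_def by simp
  moreover have "(SUP s\<in>{0..t}. min (g s) (INF u\<in>{s..t}. f u)) \<le> (SUP u\<in>{0..t}. g u)"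
    by (rule SUP_mono) (meson min.cobounded1)
  then have "Xi_gen c f g t \<le> max c (SUP u\<in>{0..t}. g u)"
    unfolding Xi_gen_def by (rule max.mono[OF min.cobounded1])
  ultimately show ?thesis using assms(2) inf_fin sup_fin
    by (cases c; cases "Xi_gen c f g t"; auto simp: min_def max_def split: if_splits)
qed

lemma cadlag_uminus:
  fixes f :: "real \<Rightarrow> 'a::topological_group_add"
  assumes "cadlag f"
  shows "cadlag (\<lambda>t. - f t)"
  using assms unfolding cadlag_def by (blast intro: tendsto_minus)

lemma left_lim_uminus:
  fixes h :: "real \<Rightarrow> real"
  assumes "cadlag h" "0 \<le> t"
  shows "left_lim (\<lambda>u. - h u) t = - left_lim h t"
proof (cases "t = 0")
  case False
  then obtain L where L: "(h \<longlongrightarrow> L) (at_left t)" using assms unfolding cadlag_def by force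
  then have "Lim (at_left t) h = L" "Lim (at_left t) (\<lambda>u. - h u) = - L"
    by (auto intro!: tendsto_Lim tendsto_minus simp: trivial_limit_at_left_real)
  then show ?thesis unfolding left_lim_def using False by simp
qed (simp add: left_lim_def)

lemma ereal_uminus_compare:
  fixes a :: ereal
  shows "- a \<le> ereal (- x) \<longleftrightarrow> ereal x \<le> a" "ereal (- x) \<le> - a \<longleftrightarrow> a \<le> ereal x"
    and "- a < ereal (- x) \<longleftrightarrow> ereal x < a" "ereal (- x) < - a \<longleftrightarrow> a < ereal x"
  by (cases a; simp)+

lemma ESP_uminus:
  assumes "ESP l r \<psi> \<phi> \<eta>"
  shows "ESP (\<lambda>t. - r t) (\<lambda>t. - l t) (\<lambda>t. - \<psi> t) (\<lambda>t. - \<phi> t) (\<lambda>t. - \<eta> t)"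
proof -
  have E: "cadlag \<phi>" "cadlag \<eta>"
    "\<forall>t\<ge>0. \<phi> t = \<psi> t + \<eta> t \<and> l t \<le> ereal (\<phi> t) \<and> ereal (\<phi> t) \<le> r t"
    "\<forall>s t. 0 \<le> s \<longrightarrow> s \<le> t \<longrightarrow>
        ((\<forall>u\<in>{s<..t}. ereal (\<phi> u) < r u) \<longrightarrow> \<eta> t - \<eta> s \<ge> 0) \<and>
        ((\<forall>u\<in>{s<..t}. ereal (\<phi> u) > l u) \<longrightarrow> \<eta> t - \<eta> s \<le> 0)"
    "\<forall>t\<ge>0. (ereal (\<phi> t) < r t \<longrightarrow> \<eta> t - left_lim \<eta> t \<ge> 0) \<and>
             (ereal (\<phi> t) > l t \<longrightarrow> \<eta> t - left_lim \<eta> t \<le> 0)"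
    using assms unfolding ESP_def by blast+
  have "left_lim (\<lambda>u. - \<eta> u) t = - left_lim \<eta> t" if "0 \<le> t" for t
    using left_lim_uminus[OF E(2) that] .
  then show ?thesis
    unfolding ESP_def ereal_uminus_compare
  proof (intro conjI cadlag_uminus[OF E(1)] cadlag_uminus[OF E(2)] allI impI)
    fix s t :: real assume "0 \<le> s" "s \<le> t"
    then show "\<forall>u\<in>{s<..t}. ereal (\<phi> u) < r u \<Longrightarrow> - \<eta> t - - \<eta> s \<le> 0"
      and "\<forall>u\<in>{s<..t}. l u < ereal (\<phi> u) \<Longrightarrow> 0 \<le> - \<eta> t - - \<eta> s"
      using E(4) by force+
  qed (use E(3,5) in auto)
qed

text \<open>With \<sigma> the last time up to t at which h \<le> h s, h stays above h s on (\<sigma>, t],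
  and h(\<sigma>-) \<le> h s.\<close>

lemma le_start_if_no_upward_escape:
  fixes h :: "real \<Rightarrow> real"
  assumes "s \<le> t"
    and left_limits: "\<And>T. s < T \<Longrightarrow> T \<le> t \<Longrightarrow> \<exists>L. (h \<longlongrightarrow> L) (at_left T)"
    and stays_above: "\<And>\<sigma>. s \<le> \<sigma> \<Longrightarrow> \<sigma> \<le> t \<Longrightarrow> (\<forall>u\<in>{\<sigma><..t}. h s < h u) \<Longrightarrow> h t \<le> h \<sigma>"
    and no_jump_up: "\<And>\<sigma>. s < \<sigma> \<Longrightarrow> \<sigma> \<le> t \<Longrightarrow> h s < h \<sigma> \<Longrightarrow> h \<sigma> \<le> Lim (at_left \<sigma>) h"
  shows "h t \<le> h s"
proof (rule ccontr)
  assume "\<not> h t \<le> h s"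
  define B where "B = {u. s \<le> u \<and> u \<le> t \<and> h u \<le> h s}"
  define \<sigma> where "\<sigma> = Sup B"
  have B: "s \<in> B" "bdd_above B" unfolding B_def using assms(1) by (auto intro: bdd_aboveI[of _ t])
  have \<sigma>: "s \<le> \<sigma>" "\<sigma> \<le> t" unfolding \<sigma>_def using B by (auto intro: cSup_upper cSup_least simp: B_def)
  have "h s < h u" if "u \<in> {\<sigma><..t}" for u
    using that cSup_upper[OF _ B(2), of u] \<sigma>(1) unfolding \<sigma>_def B_def by force
  then have "h s < h \<sigma>" using stays_above[OF \<sigma>] \<open>\<not> h t \<le> h s\<close> by force
  then have "s < \<sigma>" using \<sigma>(1) by (cases "s = \<sigma>") auto
  obtain L where L: "(h \<longlongrightarrow> L) (at_left \<sigma>)" using left_limits[OF \<open>s < \<sigma>\<close> \<sigma>(2)] by blast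
  have "L \<le> h s"
  proof (rule ccontr)
    assume "\<not> L \<le> h s"
    then have "eventually (\<lambda>u. h s < h u) (at_left \<sigma>)" using L by (intro order_tendstoD) auto
    then obtain b where b: "b < \<sigma>" "\<And>u. b < u \<Longrightarrow> u < \<sigma> \<Longrightarrow> h s < h u"
      using eventually_at_left[OF \<open>s < \<sigma>\<close>] by auto
    obtain a where a: "a \<in> B" "max b s < a" using less_cSup_iff[OF _ B(2)] B(1) b(1) \<open>s < \<sigma>\<close>
      unfolding \<sigma>_def by (metis empty_iff max_less_iff_conj)
    have "a \<le> \<sigma>" unfolding \<sigma>_def using a(1) B(2) by (rule cSup_upper)
    moreover have "a \<noteq> \<sigma>" using a(1) \<open>h s < h \<sigma>\<close> unfolding B_def by auto
    ultimately show False using a b(2)[of a] unfolding B_def by auto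
  qed
  moreover have "Lim (at_left \<sigma>) h = L" using L by (intro tendsto_Lim) (auto simp: trivial_limit_at_left_real)
  ultimately show False using no_jump_up[OF \<open>s < \<sigma>\<close> \<sigma>(2) \<open>h s < h \<sigma>\<close>] \<open>h s < h \<sigma>\<close> by simp
qed

lemma ESP_eta_le_on_flat_data:
  assumes E: "ESP l r \<psi> \<phi> \<eta>" and ab: "0 \<le> a" "a \<le> b"
    and flat: "\<And>u. u \<in> {a..b} \<Longrightarrow> \<psi> u = p" "\<And>u. u \<in> {a..b} \<Longrightarrow> l u = L"
  shows "\<eta> b \<le> \<eta> a"
proof (rule le_start_if_no_upward_escape[OF ab(2)])
  have \<phi>: "\<phi> u = p + \<eta> u" if "u \<in> {a..b}" for u
    using E flat(1)[OF that] that ab unfolding ESP_def by auto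
  have "L \<le> ereal (\<phi> a)" using E ab flat(2)[of a] unfolding ESP_def by auto
  then have above_l: "l u < ereal (\<phi> u)" if "u \<in> {a..b}" "\<eta> a < \<eta> u" for u
    using that \<phi>[OF that(1)] \<phi>[of a] flat(2)[OF that(1)] ab by (auto elim: order.strict_trans1)
  show "\<exists>L. (\<eta> \<longlongrightarrow> L) (at_left T)" if "a < T" for T
    using E that ab unfolding ESP_def cadlag_def by auto
  show "\<eta> b \<le> \<eta> \<sigma>" if "a \<le> \<sigma>" "\<sigma> \<le> b" "\<forall>u\<in>{\<sigma><..b}. \<eta> a < \<eta> u" for \<sigma>
  proof -
    have "\<forall>u\<in>{\<sigma><..b}. l u < ereal (\<phi> u)" using that above_l by auto
    then show ?thesis using E that(1,2) ab unfolding ESP_def by force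
  qed
  show "\<eta> \<sigma> \<le> Lim (at_left \<sigma>) \<eta>" if "a < \<sigma>" "\<sigma> \<le> b" "\<eta> a < \<eta> \<sigma>" for \<sigma>
  proof -
    have "l \<sigma> < ereal (\<phi> \<sigma>)" using that above_l by auto
    then have "\<eta> \<sigma> \<le> left_lim \<eta> \<sigma>" using E that(1) ab unfolding ESP_def by force
    then show ?thesis unfolding left_lim_def using that(1) ab by auto
  qed
qed

lemma ESP_eta_const_on_flat_data:
  assumes E: "ESP l r \<psi> \<phi> \<eta>" and ab: "0 \<le> a" "a \<le> b"
    and flat: "\<And>u. u \<in> {a..b} \<Longrightarrow> \<psi> u = p" "\<And>u. u \<in> {a..b} \<Longrightarrow> l u = L"
      "\<And>u. u \<in> {a..b} \<Longrightarrow> r u = R"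
  shows "\<eta> b = \<eta> a"
proof -
  have "\<eta> b \<le> \<eta> a" using ESP_eta_le_on_flat_data[OF E ab flat(1,2)] .
  moreover have "- \<eta> b \<le> - \<eta> a"
    using ESP_eta_le_on_flat_data[OF ESP_uminus[OF E] ab, of "- p" "- R"] flat(1,3) by simp
  ultimately show ?thesis by simp
qed

lemma ESP_jump_le:
  assumes E1: "ESP l r \<psi> \<phi>1 \<eta>1" and E2: "ESP l r \<psi> \<phi>2 \<eta>2"
    and "0 \<le> T" "left_lim \<eta>1 T = left_lim \<eta>2 T"
  shows "\<eta>1 T \<le> \<eta>2 T"
proof (rule ccontr)
  assume "\<not> \<eta>1 T \<le> \<eta>2 T"
  moreover have "\<phi>1 T = \<psi> T + \<eta>1 T" "l T \<le> ereal (\<phi>1 T)" "ereal (\<phi>1 T) \<le> r T"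
    and "\<phi>2 T = \<psi> T + \<eta>2 T" "l T \<le> ereal (\<phi>2 T)" "ereal (\<phi>2 T) \<le> r T"
    using E1 E2 assms(3) unfolding ESP_def by auto
  ultimately have lt: "ereal (\<phi>2 T) < ereal (\<phi>1 T)" by simp
  have "ereal (\<phi>2 T) < r T" "l T < ereal (\<phi>1 T)"
    using order.strict_trans2[OF lt \<open>ereal (\<phi>1 T) \<le> r T\<close>]
      order.strict_trans1[OF \<open>l T \<le> ereal (\<phi>2 T)\<close> lt] .
  then have "\<eta>1 T \<le> left_lim \<eta>1 T" "left_lim \<eta>2 T \<le> \<eta>2 T"
    using E1 E2 assms(3) unfolding ESP_def by force+
  then show False using \<open>\<not> \<eta>1 T \<le> \<eta>2 T\<close> assms(4) by simp
qed

lemma nonneg_real_induct: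
  fixes t :: real
  assumes "0 \<le> t"
    and step: "\<And>T. 0 \<le> T \<Longrightarrow> (\<And>u. 0 \<le> u \<Longrightarrow> u < T \<Longrightarrow> P u) \<Longrightarrow> \<exists>b>T. \<forall>u\<in>{T..<b}. P u"
  shows "P t"
proof (rule ccontr)
  assume "\<not> P t"
  define D where "D = {u. 0 \<le> u \<and> \<not> P u}"
  have D: "t \<in> D" "bdd_below D" unfolding D_def using assms(1) \<open>\<not> P t\<close> by (auto intro: bdd_belowI[of _ 0])
  define T where "T = Inf D"
  have "0 \<le> T" unfolding T_def using D(1) by (intro cInf_greatest) (auto simp: D_def)
  moreover have "P u" if "0 \<le> u" "u < T" for u
    using that cInf_lower[OF _ D(2), of u] unfolding T_def D_def by force
  ultimately obtain b where b: "T < b" "\<forall>u\<in>{T..<b}. P u" using step by blast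
  then obtain e where "e \<in> D" "e < b" using cInf_less_iff[of D b] D unfolding T_def by blast
  moreover have "T \<le> e" unfolding T_def using \<open>e \<in> D\<close> D(2) by (rule cInf_lower)
  ultimately show False using b(2) unfolding D_def by auto
qed

lemma ESP_unique:
  assumes E1: "ESP l r \<psi> \<phi>1 \<eta>1" and E2: "ESP l r \<psi> \<phi>2 \<eta>2"
    and S: "finite S" "jumps_in S \<psi>" "jumps_in S l" "jumps_in S r" and "0 \<le> t"
  shows "\<eta>1 t = \<eta>2 t"
  using assms(7)
proof (rule nonneg_real_induct)
  fix T :: real assume T: "0 \<le> T" and before: "\<And>u. 0 \<le> u \<Longrightarrow> u < T \<Longrightarrow> \<eta>1 u = \<eta>2 u"
  have "left_lim \<eta>1 T = left_lim \<eta>2 T"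
  proof (cases "T = 0")
    case False
    then have "0 < T" using T by simp
    then have "eventually (\<lambda>u. \<eta>1 u = \<eta>2 u) (at_left T)"
      using eventually_at_left_real[OF \<open>0 < T\<close>] by (elim eventually_mono) (auto intro: before)
    then show ?thesis unfolding left_lim_def by (simp add: Lim_cong)
  qed (simp add: left_lim_def)
  then have at_T: "\<eta>1 T = \<eta>2 T"
    using ESP_jump_le[OF E1 E2 T] ESP_jump_le[OF E2 E1 T] by (simp add: order.antisym)
  obtain b where b: "T < b" "{T<..<b} \<inter> S = {}" using finite_gap_right[OF S(1)] .
  have "\<eta>1 u = \<eta>2 u" if "u \<in> {T..<b}" for u
  proof -
    have flat: "\<psi> v = \<psi> T" "l v = l T" "r v = r T" if "v \<in> {T..u}" for v
      using that \<open>u \<in> {T..<b}\<close> by (auto intro!: jumps_in_const_Ico[OF S(2) T b(2)]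
          jumps_in_const_Ico[OF S(3) T b(2)] jumps_in_const_Ico[OF S(4) T b(2)])
    have "T \<le> u" using that by simp
    show ?thesis using ESP_eta_const_on_flat_data[OF E1 T \<open>T \<le> u\<close> flat]
        ESP_eta_const_on_flat_data[OF E2 T \<open>T \<le> u\<close> flat] at_T by simp
  qed
  then show "\<exists>b>T. \<forall>u\<in>{T..<b}. \<eta>1 u = \<eta>2 u" using b(1) by blast
qed

locale piecewise_const_data =
  fixes l r :: "real \<Rightarrow> ereal" and \<psi> :: "real \<Rightarrow> real" and S :: "real set"
  assumes finite_S: "finite S"
    and jumps_l: "jumps_in S l" and jumps_r: "jumps_in S r" and jumps_\<psi>: "jumps_in S \<psi>"
    and l_fin: "\<And>t. 0 \<le> t \<Longrightarrow> l t \<noteq> \<infinity>" and r_fin: "\<And>t. 0 \<le> t \<Longrightarrow> r t \<noteq> -\<infinity>"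
    and l_le_r: "\<And>t. 0 \<le> t \<Longrightarrow> l t \<le> r t"
begin

definition lower :: "real \<Rightarrow> ereal" where "lower t = ereal (\<psi> t) - r t"
definition upper :: "real \<Rightarrow> ereal" where "upper t = ereal (\<psi> t) - l t"
definition xi :: "real \<Rightarrow> real" where "xi t = real_of_ereal (Xi l r \<psi> t)"

lemma Xi_eq: "Xi l r \<psi> = Xi_gen (max (lower 0) 0) upper lower"
  unfolding Xi_eq_Xi_gen lower_def[abs_def] upper_def[abs_def] ..

lemma lower_le_upper: "0 \<le> t \<Longrightarrow> lower t \<le> upper t"
  unfolding lower_def upper_def using l_le_r by (intro ereal_minus_mono) auto

lemma jumps_lower: "jumps_in S lower"
  unfolding lower_def[abs_def] by (rule jumps_in_comp2[OF jumps_\<psi> jumps_r])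

lemma jumps_upper: "jumps_in S upper"
  unfolding upper_def[abs_def] by (rule jumps_in_comp2[OF jumps_\<psi> jumps_l])

lemma jumps_Xi: "jumps_in S (Xi l r \<psi>)"
  unfolding Xi_eq using jumps_upper jumps_lower lower_le_upper by (rule Xi_gen_jumps_in)

lemma Xi_finite: "0 \<le> t \<Longrightarrow> \<bar>Xi l r \<psi> t\<bar> \<noteq> \<infinity>"
  unfolding Xi_eq
proof (rule Xi_gen_finite)
  have "lower 0 \<noteq> \<infinity>" using r_fin[of 0] unfolding lower_def by (cases "r 0") auto
  then show "\<bar>max (lower 0) 0\<bar> \<noteq> \<infinity>" by (cases "lower 0") (auto simp: max_def)
  show "finite (upper ` {0..t})" "finite (lower ` {0..t})"
    using jumps_in_finite_image[OF finite_S] jumps_upper jumps_lower by blast+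
  show "upper u \<noteq> -\<infinity>" "lower u \<noteq> \<infinity>" if "u \<in> {0..t}" for u
    using l_fin[of u] r_fin[of u] that unfolding upper_def lower_def by (cases "l u"; cases "r u"; auto)+
qed

lemma Xi_ereal: "0 \<le> t \<Longrightarrow> Xi l r \<psi> t = ereal (xi t)"
  using Xi_finite[of t] unfolding xi_def by (cases "Xi l r \<psi> t") auto

lemma jumps_xi: "jumps_in S xi"
  unfolding xi_def[abs_def] by (rule jumps_in_comp[OF jumps_Xi])

lemma cadlag_xi: "cadlag xi"
  by (rule jumps_in_cadlag[OF finite_S jumps_xi])

lemma Xi_jump: "0 \<le> t \<Longrightarrow> Xi l r \<psi> t = max (min (ereal (left_lim xi t)) (upper t)) (lower t)"
proof (cases "t = 0")
  case True
  then show ?thesis unfolding Xi_eq using Xi_gen_at_0[of lower upper 0] lower_le_upper[of 0]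
    by (simp add: left_lim_def zero_ereal_def)
next
  case False
  assume "0 \<le> t"
  with False obtain s0 where s0: "0 \<le> s0" "s0 < t" "{s0<..<t} \<inter> S = {}"
    using finite_gap_left[OF finite_S, of 0 t] by auto
  have "Xi l r \<psi> t = max (min (Xi l r \<psi> s0) (upper t)) (lower t)" unfolding Xi_eq
    using s0(1,2) lower_le_upper[OF s0(1)] lower_le_upper[OF \<open>0 \<le> t\<close>]
      jumps_in_const_Ico[OF jumps_upper s0(1,3)] jumps_in_const_Ico[OF jumps_lower s0(1,3)]
    by (rule Xi_gen_jump)
  then show ?thesis using left_lim_jumps_in[OF jumps_xi s0] Xi_ereal[OF s0(1)] by simp
qed

lemma phi_less_r_iff: "0 \<le> t \<Longrightarrow> ereal (\<psi> t - xi t) < r t \<longleftrightarrow> lower t < Xi l r \<psi> t"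
  using r_fin[of t] unfolding lower_def Xi_ereal by (cases "r t") auto

lemma phi_greater_l_iff: "0 \<le> t \<Longrightarrow> l t < ereal (\<psi> t - xi t) \<longleftrightarrow> Xi l r \<psi> t < upper t"
  using l_fin[of t] unfolding upper_def Xi_ereal by (cases "l t") auto

lemma phi_between:
  assumes "0 \<le> t"
  shows "l t \<le> ereal (\<psi> t - xi t) \<and> ereal (\<psi> t - xi t) \<le> r t"
proof -
  have "lower t \<le> ereal (xi t)" "ereal (xi t) \<le> upper t"
    using Xi_gen_between[of t lower upper "max (lower 0) 0", OF assms lower_le_upper[OF assms]]
    unfolding Xi_eq[symmetric] Xi_ereal[OF assms] by auto
  then show ?thesis using l_fin[OF assms] r_fin[OF assms] unfolding lower_def upper_def
    by (cases "l t"; cases "r t") auto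
qed

lemma xi_jump_direction:
  assumes "0 \<le> t"
  shows "ereal (\<psi> t - xi t) < r t \<Longrightarrow> xi t \<le> left_lim xi t"
    and "l t < ereal (\<psi> t - xi t) \<Longrightarrow> left_lim xi t \<le> xi t"
proof -
  have "(lower t < Xi l r \<psi> t \<longrightarrow> Xi l r \<psi> t \<le> ereal (left_lim xi t)) \<and>
        (Xi l r \<psi> t < upper t \<longrightarrow> ereal (left_lim xi t) \<le> Xi l r \<psi> t)"
    unfolding Xi_jump[OF assms] by (rule max_min_jump_direction)
  then show "ereal (\<psi> t - xi t) < r t \<Longrightarrow> xi t \<le> left_lim xi t"
    and "l t < ereal (\<psi> t - xi t) \<Longrightarrow> left_lim xi t \<le> xi t"
    unfolding phi_less_r_iff[OF assms] phi_greater_l_iff[OF assms] Xi_ereal[OF assms] by auto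
qed

lemma xi_antimono:
  assumes "0 \<le> s" "s \<le> t" "\<forall>u\<in>{s<..t}. ereal (\<psi> u - xi u) < r u"
  shows "xi t \<le> xi s"
proof (rule jumps_in_antimono[OF finite_S jumps_xi assms(1,2)])
  fix s0 T assume "s \<le> s0" "s0 < T" "T \<le> t" "{s0<..<T} \<inter> S = {}"
  then show "xi T \<le> xi s0"
    using xi_jump_direction(1)[of T] left_lim_jumps_in[OF jumps_xi, of s0 T] assms by auto
qed

lemma xi_mono:
  assumes "0 \<le> s" "s \<le> t" "\<forall>u\<in>{s<..t}. l u < ereal (\<psi> u - xi u)"
  shows "xi s \<le> xi t"
proof -
  have "- xi t \<le> - xi s"
  proof (rule jumps_in_antimono[OF finite_S jumps_in_comp[OF jumps_xi] assms(1,2)])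
    fix s0 T assume "s \<le> s0" "s0 < T" "T \<le> t" "{s0<..<T} \<inter> S = {}"
    then show "- xi T \<le> - xi s0"
      using xi_jump_direction(2)[of T] left_lim_jumps_in[OF jumps_xi, of s0 T] assms by auto
  qed
  then show ?thesis by simp
qed

lemma ESP_Xi: "ESP l r \<psi> (\<lambda>t. \<psi> t - xi t) (\<lambda>t. - xi t)"
  unfolding ESP_def
proof (intro conjI allI impI)
  show "cadlag (\<lambda>t. \<psi> t - xi t)"
    by (rule jumps_in_cadlag[OF finite_S jumps_in_comp2[OF jumps_\<psi> jumps_xi]])
  show "cadlag (\<lambda>t. - xi t)" by (rule cadlag_uminus[OF cadlag_xi])
  fix t :: real assume t: "0 \<le> t"
  show "\<psi> t - xi t = \<psi> t + - xi t" by simp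
  show "l t \<le> ereal (\<psi> t - xi t)" "ereal (\<psi> t - xi t) \<le> r t" using phi_between[OF t] by auto
  have "left_lim (\<lambda>u. - xi u) t = - left_lim xi t" by (rule left_lim_uminus[OF cadlag_xi t])
  then show "ereal (\<psi> t - xi t) < r t \<Longrightarrow> 0 \<le> - xi t - left_lim (\<lambda>u. - xi u) t"
    and "l t < ereal (\<psi> t - xi t) \<Longrightarrow> - xi t - left_lim (\<lambda>u. - xi u) t \<le> 0"
    using xi_jump_direction[OF t] by auto
next
  fix s t :: real assume "0 \<le> s" "s \<le> t"
  then show "\<forall>u\<in>{s<..t}. ereal (\<psi> u - xi u) < r u \<Longrightarrow> 0 \<le> - xi t - - xi s"
    and "\<forall>u\<in>{s<..t}. l u < ereal (\<psi> u - xi u) \<Longrightarrow> - xi t - - xi s \<le> 0"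
    using xi_antimono xi_mono by auto
qed

end

theorem proposition2p9:
  fixes l r :: "real \<Rightarrow> ereal" and \<psi> :: "real \<Rightarrow> real"
  assumes l_cadlag: "cadlag l" and l_fin: "\<forall>t\<ge>0. l t \<noteq> \<infinity>"
      and r_cadlag: "cadlag r" and r_fin: "\<forall>t\<ge>0. r t \<noteq> -\<infinity>"
      and psi_cadlag: "cadlag \<psi>"
      and l_pc: "piecewise_const l" and r_pc: "piecewise_const r"
      and psi_pc: "piecewise_const \<psi>"
      and l_le_r: "\<forall>t\<ge>0. l t \<le> r t"
  shows "(\<forall>t\<ge>0. \<bar>Xi l r \<psi> t\<bar> \<noteq> \<infinity>) \<and>
         ESP l r \<psi> (\<lambda>t. \<psi> t - real_of_ereal (Xi l r \<psi> t)) (\<lambda>t. - real_of_ereal (Xi l r \<psi> t)) \<and>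
         (\<forall>\<phi>' \<eta>'. ESP l r \<psi> \<phi>' \<eta>' \<longrightarrow>
            (\<forall>t\<ge>0. \<phi>' t = \<psi> t - real_of_ereal (Xi l r \<psi> t) \<and>
                   \<eta>' t = - real_of_ereal (Xi l r \<psi> t)))"
proof -
  obtain Sl Sr S\<psi> where "finite Sl" "jumps_in Sl l" "finite Sr" "jumps_in Sr r"
    and "finite S\<psi>" "jumps_in S\<psi> \<psi>"
    using l_pc r_pc psi_pc unfolding piecewise_const_iff_jumps_in by blast
  then interpret piecewise_const_data l r \<psi> "Sl \<union> Sr \<union> S\<psi>"
    using l_fin r_fin l_le_r by unfold_locales (auto elim: jumps_in_subset)
  have "\<phi>' t = \<psi> t - xi t \<and> \<eta>' t = - xi t" if "ESP l r \<psi> \<phi>' \<eta>'" "0 \<le> t" for \<phi>' \<eta>' t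
  proof -
    have "\<eta>' t = - xi t"
      using ESP_unique[OF that(1) ESP_Xi finite_S jumps_\<psi> jumps_l jumps_r that(2)] .
    moreover have "\<phi>' t = \<psi> t + \<eta>' t" using that unfolding ESP_def by blast
    ultimately show ?thesis by simp
  qed
  then show ?thesis using Xi_finite ESP_Xi unfolding xi_def by blast
qed

end
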